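(* Let $\mathfrak g$ be a complex Lie algebra with bracket $[\ ,\ ]$, let $\tilde{\mathfrak g}=\mathfrak g\oplus\mathbb C$, and for $\lambda\in\mathbb C$ let $\mathfrak R(\lambda):\tilde{\mathfrak g}\otimes\tilde{\mathfrak g}\to\tilde{\mathfrak g}\otimes\tilde{\mathfrak g}$ be $\mathfrak R(\lambda)\big((x+\alpha)\otimes(y+\beta)\big)=(y+\beta)\otimes(x+\alpha)+[x,y]\otimes\lambda$ ($x,y\in\mathfrak g$, $\alpha,\beta\in\mathbb C$). Let $V$ be a complex vector space and $A:\mathfrak g\otimes V\to V$ a linear map, and define $\mathfrak R_V(\lambda):\tilde{\mathfrak g}\otimes V\to V\otimes\tilde{\mathfrak g}$ by $\mathfrak R_V(\lambda)\big((x+\alpha)\otimes v\big)=v\otimes(x+\alpha)+A(x,v)\otimes\lambda$ ($x\in\mathfrak g$, $v\in V$, $\alpha\in\mathbb C$). Then the equality of maps $\tilde{\mathfrak g}\otimes\tilde{\mathfrak g}\otimes V\to V\otimes\tilde{\mathfrak g}\otimes\tilde{\mathfrak g}$ $$(\mathfrak R_V(\lambda)\otimes 1_{\tilde{\mathfrak g}})\circ(1_{\tilde{\mathfrak g}}\otimes\mathfrak R_V(\lambda))\circ(\mathfrak R(\lambda)\otimes 1_V)=(1_V\otimes\mathfrak R(\lambda))\circ(\mathfrak R_V(\lambda)\otimes 1_{\tilde{\mathfrak g}})\circ(1_{\tilde{\mathfrak g}}\otimes\mathfrak R_V(\lambda))$$ holds for every $\lambda\in\mathbb C$ if and only if $A$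 is a $\mathfrak g$-action on $V$, i.e. $A([x,y],v)=A(x,A(y,v))-A(y,A(x,v))$ for all $x,y\in\mathfrak g$, $v\in V$.
   Context: All tensor products are over $\mathbb C$; $\lambda$, $[x,y]$ are regarded as elements of $\tilde{\mathfrak g}=\mathfrak g\oplus\mathbb C$ via the obvious inclusions. *)

theory Defs
  imports Complex_Main "HOL-Library.Poly_Mapping" "HOL-Library.Product_Plus"
begin

text \<open>Complex vector spaces are types of class ab_group_add together with a
scalar multiplication by complex numbers satisfying the vector_space axioms.
Tensor products are realised as free complex vector spaces on tuples modulo
the span of the multilinearity relations.\<close>

type_synonym 'a fv = "'a \<Rightarrow>\<^sub>0 complex"

definition fsc :: "complex \<Rightarrow> 'a fv \<Rightarrow> 'a fv" where
  "fsc c p = Poly_Mapping.map (\<lambda>z. c * z) p"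

definition gen :: "'a \<Rightarrow> 'a fv" where
  "gen s = Poly_Mapping.single s 1"

definition fext :: "('a \<Rightarrow> 'b fv) \<Rightarrow> 'a fv \<Rightarrow> 'b fv" where
  "fext f p = (\<Sum>s\<in>Poly_Mapping.keys p. fsc (Poly_Mapping.lookup p s) (f s))"

definition tensor3_rels ::
  "(complex \<Rightarrow> 'a \<Rightarrow> 'a::ab_group_add) \<Rightarrow> (complex \<Rightarrow> 'b \<Rightarrow> 'b::ab_group_add) \<Rightarrow>
   (complex \<Rightarrow> 'c \<Rightarrow> 'c::ab_group_add) \<Rightarrow> ('a \<times> 'b \<times> 'c) fv set" where
  "tensor3_rels sa sb sc =
     {gen (a + a', b, c) - gen (a, b, c) - gen (a', b, c) | a a' b c. True} \<union>
     {gen (a, b + b', c) - gen (a, b, c) - gen (a, b', c) | a b b' c. True} \<union>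
     {gen (a, b, c + c') - gen (a, b, c) - gen (a, b, c') | a b c c'. True} \<union>
     {gen (sa k a, b, c) - fsc k (gen (a, b, c)) | k a b c. True} \<union>
     {gen (a, sb k b, c) - fsc k (gen (a, b, c)) | k a b c. True} \<union>
     {gen (a, b, sc k c) - fsc k (gen (a, b, c)) | k a b c. True}"

definition tensor3_eq ::
  "(complex \<Rightarrow> 'a \<Rightarrow> 'a::ab_group_add) \<Rightarrow> (complex \<Rightarrow> 'b \<Rightarrow> 'b::ab_group_add) \<Rightarrow>
   (complex \<Rightarrow> 'c \<Rightarrow> 'c::ab_group_add) \<Rightarrow> ('a \<times> 'b \<times> 'c) fv \<Rightarrow> ('a \<times> 'b \<times> 'c) fv \<Rightarrow> bool" where
  "tensor3_eq sa sb sc p q \<longleftrightarrow> p - q \<in> module.span fsc (tensor3_rels sa sb sc)"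

definition tsc :: "(complex \<Rightarrow> 'g \<Rightarrow> 'g) \<Rightarrow> complex \<Rightarrow> 'g \<times> complex \<Rightarrow> 'g \<times> complex" where
  "tsc sg k p = (sg k (fst p), k * snd p)"

definition Rmap :: "('g::zero \<Rightarrow> 'g \<Rightarrow> 'g) \<Rightarrow> complex \<Rightarrow> 'g \<times> complex \<Rightarrow> 'g \<times> complex \<Rightarrow>
     (('g \<times> complex) \<times> ('g \<times> complex)) fv" where
  "Rmap br lam p q = gen (q, p) + gen ((br (fst p) (fst q), 0), (0, lam))"

definition RVmap :: "('g::zero \<Rightarrow> 'v \<Rightarrow> 'v) \<Rightarrow> complex \<Rightarrow> 'g \<times> complex \<Rightarrow> 'v \<Rightarrow>
     ('v \<times> ('g \<times> complex)) fv" where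
  "RVmap A lam p v = gen (v, p) + gen (A (fst p) v, (0, lam))"

definition tens_left :: "('a \<Rightarrow> 'b \<Rightarrow> ('p \<times> 'q) fv) \<Rightarrow> 'a \<times> 'b \<times> 'c \<Rightarrow> ('p \<times> 'q \<times> 'c) fv" where
  "tens_left f t = fext (\<lambda>(p, q). gen (p, q, snd (snd t))) (f (fst t) (fst (snd t)))"

definition tens_right :: "('b \<Rightarrow> 'c \<Rightarrow> ('p \<times> 'q) fv) \<Rightarrow> 'a \<times> 'b \<times> 'c \<Rightarrow> ('a \<times> 'p \<times> 'q) fv" where
  "tens_right f t = fext (\<lambda>(p, q). gen (fst t, p, q)) (f (fst (snd t)) (snd (snd t)))"

end

theory Submission
  imports Defs
begin

text \<open>Compare the two sides of the braid relation on a generator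
  \<open>(x + \<alpha>) \<otimes> (y + \<beta>) \<otimes> v\<close>. After expansion all terms cancel except those in
  \<open>V \<otimes> \<lambda> \<otimes> \<lambda>\<close>, which add up to \<open>(A([x,y],v) - A(x,A(y,v)) + A(y,A(x,v))) \<otimes> \<lambda> \<otimes> \<lambda>\<close>,
  and terms with a zero tensor factor. So the relation holds when \<open>A\<close> is an action, and
  conversely the trilinear map \<open>w \<otimes> (x + \<alpha>) \<otimes> (y + \<beta>) \<mapsto> \<alpha>\<beta>w\<close>, which descends to the
  tensor product, recovers the defect of the action from the case \<open>\<lambda> = 1\<close>.\<close>

lemma lookup_fsc: "Poly_Mapping.lookup (fsc c p) k = c * Poly_Mapping.lookup p k"
  unfolding fsc_def by (simp add: Poly_Mapping.map.rep_eq when_def)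

lemma lookup_gen: "Poly_Mapping.lookup (gen s) k = (if s = k then 1 else 0)"
  unfolding gen_def by (simp add: lookup_single when_def)

lemma keys_fsc_subset: "Poly_Mapping.keys (fsc c p) \<subseteq> Poly_Mapping.keys p"
  by (auto simp: in_keys_iff lookup_fsc)

lemma module_fsc: "module (fsc :: complex \<Rightarrow> 'a fv \<Rightarrow> 'a fv)"
  by unfold_locales (auto intro!: poly_mapping_eqI simp: lookup_fsc lookup_add algebra_simps)

lemma fv_expansion: "p = (\<Sum>s\<in>Poly_Mapping.keys p. fsc (Poly_Mapping.lookup p s) (gen s))"
  by (rule poly_mapping_eqI)
     (simp add: lookup_sum lookup_fsc lookup_gen in_keys_iff if_distrib[of "\<lambda>z. _ * z"]
        sum.delta' cong: if_cong)

definition lin_ext :: "(complex \<Rightarrow> 'm \<Rightarrow> 'm) \<Rightarrow> ('a \<Rightarrow> 'm) \<Rightarrow> 'a fv \<Rightarrow> 'm::ab_group_add" where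
  "lin_ext sm g p = (\<Sum>s\<in>Poly_Mapping.keys p. sm (Poly_Mapping.lookup p s) (g s))"

lemma fext_eq_lin_ext: "fext f = lin_ext fsc f"
  by (simp add: fun_eq_iff fext_def lin_ext_def)

lemma lin_ext_eq_sum_superset:
  assumes "module sm" "finite S" "Poly_Mapping.keys p \<subseteq> S"
  shows "lin_ext sm g p = (\<Sum>s\<in>S. sm (Poly_Mapping.lookup p s) (g s))"
  unfolding lin_ext_def
  by (rule sum.mono_neutral_left) (use assms in \<open>auto simp: module.scale_zero_left in_keys_iff\<close>)

lemma module_hom_lin_ext:
  fixes g :: "'a \<Rightarrow> 'm::ab_group_add"
  assumes "module sm"
  shows "module_hom fsc sm (lin_ext sm g)"
proof -
  interpret M: module sm by fact
  show ?thesis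
  proof (rule module_hom.intro[OF module_fsc assms], unfold_locales)
    fix p q :: "'a fv"
    let ?S = "Poly_Mapping.keys p \<union> Poly_Mapping.keys q \<union> Poly_Mapping.keys (p + q)"
    show "lin_ext sm g (p + q) = lin_ext sm g p + lin_ext sm g q"
      by (subst (1 2 3) lin_ext_eq_sum_superset[OF assms, of ?S])
         (auto simp: lookup_add M.scale_left_distrib sum.distrib)
  next
    fix c p
    show "lin_ext sm g (fsc c p) = sm c (lin_ext sm g p)"
      by (subst (1 2) lin_ext_eq_sum_superset[OF assms, of "Poly_Mapping.keys p"])
         (auto simp: keys_fsc_subset lookup_fsc M.scale_sum_right)
  qed
qed

lemma lin_ext_gen: "module sm \<Longrightarrow> lin_ext sm g (gen s) = g s"
  unfolding lin_ext_def gen_def by (simp add: module.scale_one)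

lemma module_hom_fext: "module_hom fsc fsc (fext f)"
  unfolding fext_eq_lin_ext by (rule module_hom_lin_ext[OF module_fsc])

lemma fext_gen [simp]: "fext f (gen s) = f s"
  unfolding fext_eq_lin_ext by (rule lin_ext_gen[OF module_fsc])

lemma fext_add [simp]: "fext f (p + q) = fext f p + fext f q"
  by (rule module_hom.add[OF module_hom_fext])

lemma module_hom_in_span_if_gen_in_span:
  assumes "module_hom fsc fsc D" "\<And>s. D (gen s) \<in> module.span fsc R"
  shows "D t \<in> module.span fsc R"
proof -
  interpret D: module_hom fsc fsc D by fact
  have "D t = (\<Sum>s\<in>Poly_Mapping.keys t. fsc (Poly_Mapping.lookup t s) (D (gen s)))"
    by (subst fv_expansion) (simp add: D.sum D.scale)
  also have "\<dots> \<in> module.span fsc R"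
    by (intro D.m2.span_sum D.m2.span_scale assms(2))
  finally show ?thesis .
qed

lemma tensor3_rel_add_left:
  "gen (a + a', b, c) - gen (a, b, c) - gen (a', b, c) \<in> tensor3_rels sa sb sc"
  unfolding tensor3_rels_def by (intro UnI1) blast

lemma tensor3_rel_add_middle:
  "gen (a, b + b', c) - gen (a, b, c) - gen (a, b', c) \<in> tensor3_rels sa sb sc"
  unfolding tensor3_rels_def by (intro UnI1 UnI2) blast

lemma gen_zero_left_in_span: "gen (0, b, c) \<in> module.span fsc (tensor3_rels sa sb sc)"
proof -
  interpret module "fsc :: complex \<Rightarrow> ('a \<times> 'b \<times> 'c) fv \<Rightarrow> _" by (rule module_fsc)
  have "- gen (0, b, c) \<in> span (tensor3_rels sa sb sc)"
    using span_base[OF tensor3_rel_add_left[of 0 0 b c]] by simp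
  then show ?thesis using span_neg by fastforce
qed

lemma gen_zero_middle_in_span: "gen (a, 0, c) \<in> module.span fsc (tensor3_rels sa sb sc)"
proof -
  interpret module "fsc :: complex \<Rightarrow> ('a \<times> 'b \<times> 'c) fv \<Rightarrow> _" by (rule module_fsc)
  have "- gen (a, 0, c) \<in> span (tensor3_rels sa sb sc)"
    using span_base[OF tensor3_rel_add_middle[of a 0 0 c]] by simp
  then show ?thesis using span_neg by fastforce
qed

lemma gen_diff_left_in_span:
  "gen (a, b, c) - gen (a', b, c) - gen (a - a', b, c) \<in> module.span fsc (tensor3_rels sa sb sc)"
  using module.span_base[OF module_fsc tensor3_rel_add_left[of a' "a - a'" b c]] by simp

lemma lin_ext_eq_0_on_tensor3_span:
  assumes "module sm"
    and "\<And>a a' b c. g (a + a', b, c) = g (a, b, c) + g (a', b, c)"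
    and "\<And>a b b' c. g (a, b + b', c) = g (a, b, c) + g (a, b', c)"
    and "\<And>a b c c'. g (a, b, c + c') = g (a, b, c) + g (a, b, c')"
    and "\<And>k a b c. g (sa k a, b, c) = sm k (g (a, b, c))"
    and "\<And>k a b c. g (a, sb k b, c) = sm k (g (a, b, c))"
    and "\<And>k a b c. g (a, b, sc k c) = sm k (g (a, b, c))"
    and "r \<in> module.span fsc (tensor3_rels sa sb sc)"
  shows "lin_ext sm g r = 0"
proof -
  interpret module_hom fsc sm "lin_ext sm g" by (rule module_hom_lin_ext) fact
  show ?thesis
    by (rule eq_0_on_span[OF _ assms(8)])
       (auto simp: tensor3_rels_def add diff scale lin_ext_gen assms(1-7))
qed

text \<open>The projection of \<open>V \<otimes> (g \<oplus> \<complex>) \<otimes> (g \<oplus> \<complex>)\<close> onto its summand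
  \<open>V \<otimes> \<complex> \<otimes> \<complex> \<cong> V\<close>.\<close>

definition scalar_coeff ::
  "(complex \<Rightarrow> 'v \<Rightarrow> 'v::ab_group_add) \<Rightarrow> ('v \<times> ('g \<times> complex) \<times> ('g \<times> complex)) fv \<Rightarrow> 'v" where
  "scalar_coeff sv = lin_ext sv (\<lambda>(w, p, q). sv (snd p * snd q) w)"

lemma scalar_coeff_gen:
  "vector_space sv \<Longrightarrow> scalar_coeff sv (gen (w, p, q)) = sv (snd p * snd q) w"
  unfolding scalar_coeff_def by (simp add: lin_ext_gen module_iff_vector_space)

lemma scalar_coeff_eq_0_on_span:
  fixes sg :: "complex \<Rightarrow> 'g \<Rightarrow> 'g::ab_group_add"
  assumes "vector_space sv" "r \<in> module.span fsc (tensor3_rels sv (tsc sg) (tsc sg))"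
  shows "scalar_coeff sv r = 0"
proof -
  interpret vector_space sv by fact
  show ?thesis
    unfolding scalar_coeff_def
    by (rule lin_ext_eq_0_on_tensor3_span[OF module_axioms _ _ _ _ _ _ assms(2)])
       (simp_all add: tsc_def scale_right_distrib scale_left_distrib distrib_left distrib_right
          mult.assoc mult.left_commute)
qed

definition braid_lhs ::
  "('g::zero \<Rightarrow> 'g \<Rightarrow> 'g) \<Rightarrow> ('g \<Rightarrow> 'v \<Rightarrow> 'v) \<Rightarrow> complex \<Rightarrow>
   (('g \<times> complex) \<times> ('g \<times> complex) \<times> 'v) fv \<Rightarrow> ('v \<times> ('g \<times> complex) \<times> ('g \<times> complex)) fv" where
  "braid_lhs br A lam t =
     fext (tens_left (RVmap A lam)) (fext (tens_right (RVmap A lam)) (fext (tens_left (Rmap br lam)) t))"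

definition braid_rhs ::
  "('g::zero \<Rightarrow> 'g \<Rightarrow> 'g) \<Rightarrow> ('g \<Rightarrow> 'v \<Rightarrow> 'v) \<Rightarrow> complex \<Rightarrow>
   (('g \<times> complex) \<times> ('g \<times> complex) \<times> 'v) fv \<Rightarrow> ('v \<times> ('g \<times> complex) \<times> ('g \<times> complex)) fv" where
  "braid_rhs br A lam t =
     fext (tens_right (Rmap br lam)) (fext (tens_left (RVmap A lam)) (fext (tens_right (RVmap A lam)) t))"

lemma module_hom_braid_diff: "module_hom fsc fsc (\<lambda>t. braid_lhs br A lam t - braid_rhs br A lam t)"
  unfolding braid_lhs_def braid_rhs_def
  by (simp add: module_hom_iff module_fsc module_hom.scale[OF module_hom_fext]
      module.scale_right_diff_distrib[OF module_fsc])

lemma braid_diff_gen: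
  fixes br :: "'g::zero \<Rightarrow> 'g \<Rightarrow> 'g" and A :: "'g \<Rightarrow> 'v::zero \<Rightarrow> 'v"
  assumes "\<And>y. br 0 y = 0" "\<And>x. br x 0 = 0" "\<And>v. A 0 v = 0" "\<And>x. A x 0 = 0"
  shows "braid_lhs br A lam (gen ((x, \<alpha>), (y, \<beta>), v)) - braid_rhs br A lam (gen ((x, \<alpha>), (y, \<beta>), v)) =
      gen (A (br x y) v, (0, lam), (0, lam)) + gen (A y (A x v), (0, lam), (0, lam))
    - gen (A x (A y v), (0, lam), (0, lam))
    + gen (0, (br x y, 0), (0, lam)) + gen (0, (0, lam), (0, lam))
    - gen (A x v, (0, 0), (0, lam)) - gen (A y v, (0, 0), (0, lam)) - gen (A x (A y v), (0, 0), (0, lam))"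
  unfolding braid_lhs_def braid_rhs_def
  by (simp add: tens_left_def tens_right_def Rmap_def RVmap_def assms algebra_simps)

lemma braid_diff_gen_in_span:
  fixes sg :: "complex \<Rightarrow> 'g \<Rightarrow> 'g::ab_group_add" and sv :: "complex \<Rightarrow> 'v \<Rightarrow> 'v::ab_group_add"
    and br :: "'g \<Rightarrow> 'g \<Rightarrow> 'g" and A :: "'g \<Rightarrow> 'v \<Rightarrow> 'v"
    and x y :: 'g and \<alpha> \<beta> :: complex and v :: 'v
  assumes "\<And>y. br 0 y = 0" "\<And>x. br x 0 = 0" "\<And>v. A 0 v = 0" "\<And>x. A x 0 = 0"
  defines "t \<equiv> gen ((x, \<alpha>), (y, \<beta>), v)"
    and "d \<equiv> A (br x y) v - (A x (A y v) - A y (A x v))"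
  shows "braid_lhs br A lam t - braid_rhs br A lam t - gen (d, (0, lam), (0, lam))
    \<in> module.span fsc (tensor3_rels sv (tsc sg) (tsc sg))"
proof -
  interpret module "fsc :: complex \<Rightarrow> ('v \<times> ('g \<times> complex) \<times> ('g \<times> complex)) fv \<Rightarrow> _"
    by (rule module_fsc)
  let ?S = "span (tensor3_rels sv (tsc sg) (tsc sg))" and ?c = "A x (A y v) - A y (A x v)"
    and ?l = "(0, lam) :: 'g \<times> complex"
  have bracket: "gen (A (br x y) v, ?l, ?l) - gen (?c, ?l, ?l) - gen (d, ?l, ?l) \<in> ?S"
    unfolding d_def by (rule gen_diff_left_in_span)
  have commutator: "gen (A x (A y v), ?l, ?l) - gen (A y (A x v), ?l, ?l) - gen (?c, ?l, ?l) \<in> ?S"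
    by (rule gen_diff_left_in_span)
  have zero_left: "gen (0, p, q) \<in> ?S" for p q
    by (rule gen_zero_left_in_span)
  have zero_middle: "gen (w, (0, 0), q) \<in> ?S" for w q
    using gen_zero_middle_in_span[of w q sv "tsc sg" "tsc sg"] unfolding zero_prod_def .
  have "braid_lhs br A lam t - braid_rhs br A lam t - gen (d, ?l, ?l) =
      (gen (A (br x y) v, ?l, ?l) - gen (?c, ?l, ?l) - gen (d, ?l, ?l))
    - (gen (A x (A y v), ?l, ?l) - gen (A y (A x v), ?l, ?l) - gen (?c, ?l, ?l))
    + gen (0, (br x y, 0), ?l) + gen (0, ?l, ?l)
    - gen (A x v, (0, 0), ?l) - gen (A y v, (0, 0), ?l) - gen (A x (A y v), (0, 0), ?l)"
    unfolding t_def braid_diff_gen[where br = br and A = A, OF assms(1-4)] by (simp add: algebra_simps)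
  also have "\<dots> \<in> ?S"
    by (intro span_add span_diff bracket commutator zero_left zero_middle)
  finally show ?thesis .
qed

lemma action_if_braid_gen_in_span:
  fixes sg :: "complex \<Rightarrow> 'g \<Rightarrow> 'g::ab_group_add" and sv :: "complex \<Rightarrow> 'v \<Rightarrow> 'v::ab_group_add"
    and br :: "'g \<Rightarrow> 'g \<Rightarrow> 'g" and A :: "'g \<Rightarrow> 'v \<Rightarrow> 'v"
  assumes "vector_space sv"
    and "\<And>y. br 0 y = 0" "\<And>x. br x 0 = 0" "\<And>v. A 0 v = 0" "\<And>x. A x 0 = 0"
    and "braid_lhs br A 1 (gen ((x, 0), (y, 0), v)) - braid_rhs br A 1 (gen ((x, 0), (y, 0), v))
      \<in> module.span fsc (tensor3_rels sv (tsc sg) (tsc sg))"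
  shows "A (br x y) v = A x (A y v) - A y (A x v)"
proof -
  interpret V: vector_space sv by fact
  interpret F: module "fsc :: complex \<Rightarrow> ('v \<times> ('g \<times> complex) \<times> ('g \<times> complex)) fv \<Rightarrow> _"
    by (rule module_fsc)
  let ?d = "A (br x y) v - (A x (A y v) - A y (A x v))" and ?l = "(0, 1) :: 'g \<times> complex"
  from F.span_diff[OF assms(6) braid_diff_gen_in_span[where br = br and A = A, OF assms(2-5), of 1 x 0 y 0 v]]
  have "gen (?d, ?l, ?l) \<in> F.span (tensor3_rels sv (tsc sg) (tsc sg))"
    by simp
  then have "scalar_coeff sv (gen (?d, ?l, ?l)) = 0"
    by (rule scalar_coeff_eq_0_on_span[OF assms(1)])
  then show ?thesis
    by (simp add: scalar_coeff_gen[OF assms(1)])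
qed

lemma braid_diff_in_span_if_action:
  fixes sg :: "complex \<Rightarrow> 'g \<Rightarrow> 'g::ab_group_add" and sv :: "complex \<Rightarrow> 'v \<Rightarrow> 'v::ab_group_add"
    and br :: "'g \<Rightarrow> 'g \<Rightarrow> 'g" and A :: "'g \<Rightarrow> 'v \<Rightarrow> 'v"
  assumes "\<And>y. br 0 y = 0" "\<And>x. br x 0 = 0" "\<And>v. A 0 v = 0" "\<And>x. A x 0 = 0"
    and action: "\<And>x y v. A (br x y) v = A x (A y v) - A y (A x v)"
  shows "braid_lhs br A lam t - braid_rhs br A lam t \<in> module.span fsc (tensor3_rels sv (tsc sg) (tsc sg))"
proof (rule module_hom_in_span_if_gen_in_span[OF module_hom_braid_diff])
  interpret F: module "fsc :: complex \<Rightarrow> ('v \<times> ('g \<times> complex) \<times> ('g \<times> complex)) fv \<Rightarrow> _"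
    by (rule module_fsc)
  fix s :: "('g \<times> complex) \<times> ('g \<times> complex) \<times> 'v"
  obtain x \<alpha> y \<beta> v where s: "s = ((x, \<alpha>), (y, \<beta>), v)"
    by (metis prod.exhaust)
  have "braid_lhs br A lam (gen s) - braid_rhs br A lam (gen s) - gen (0, (0, lam), (0, lam))
      \<in> F.span (tensor3_rels sv (tsc sg) (tsc sg))"
    using braid_diff_gen_in_span[where br = br and A = A, OF assms(1-4), of lam x \<alpha> y \<beta> v] by (simp add: s action)
  from F.span_add[OF this gen_zero_left_in_span[of "(0, lam)" "(0, lam)"]]
  show "braid_lhs br A lam (gen s) - braid_rhs br A lam (gen s) \<in> F.span (tensor3_rels sv (tsc sg) (tsc sg))"
    by simp
qed

theorem lemma1p2p1:
  fixes sg :: "complex \<Rightarrow> 'g \<Rightarrow> 'g::ab_group_add"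
    and sv :: "complex \<Rightarrow> 'v \<Rightarrow> 'v::ab_group_add"
    and br :: "'g \<Rightarrow> 'g \<Rightarrow> 'g"
    and A :: "'g \<Rightarrow> 'v \<Rightarrow> 'v"
  assumes "vector_space sg" and "vector_space sv"
    and "\<And>x. Vector_Spaces.linear sg sg (br x)"
    and "\<And>y. Vector_Spaces.linear sg sg (\<lambda>x. br x y)"
    and "\<And>x. br x x = 0"
    and "\<And>x y z. br x (br y z) + br y (br z x) + br z (br x y) = 0"
    and "\<And>x. Vector_Spaces.linear sv sv (A x)"
    and "\<And>v. Vector_Spaces.linear sg sv (\<lambda>x. A x v)"
  shows "(\<forall>lam t. tensor3_eq sv (tsc sg) (tsc sg)
            (fext (tens_left (RVmap A lam)) (fext (tens_right (RVmap A lam)) (fext (tens_left (Rmap br lam)) t)))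
            (fext (tens_right (Rmap br lam)) (fext (tens_left (RVmap A lam)) (fext (tens_right (RVmap A lam)) t))))
         \<longleftrightarrow> (\<forall>x y v. A (br x y) v = A x (A y v) - A y (A x v))"
proof -
  have zeros: "br 0 y = 0" "br x 0 = 0" "A 0 v = 0" "A x 0 = 0" for x y v
    using assms(3,4,7,8)[THEN module_hom_linearI, THEN module_hom.zero] by simp_all
  show ?thesis
    unfolding braid_lhs_def[symmetric] braid_rhs_def[symmetric] tensor3_eq_def
    using action_if_braid_gen_in_span[where br = br and A = A, OF assms(2) zeros]
      braid_diff_in_span_if_action[where br = br and A = A, OF zeros]
    by blast
qed

end
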